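(* Let $G$ be a quadrangulation of a surface $\Sigma$, and let $B_1,\ldots,B_k$ be directed closed walks tracing the boundary cycles of $G$. If $\psi$ is a $3$-coloring of $G$, then $\sum_{i=1}^k \omega_\psi(B_i)\equiv p(G,B_1,\ldots,B_k)\pmod 4$.
   Context: A surface is a compact connected $2$-manifold with possibly empty boundary; boundary components are cuffs. $G$ is a quadrangulation of $\Sigma$ if every face of $G$ is homeomorphic to an open disk, is bounded by a cycle of $G$, and has length $4$; the boundary of $\Sigma$ is then formed by pairwise vertex-disjoint cycles of $G$, the boundary cycles. Given the directed closed walks $B_1,\ldots,B_k$ tracing the boundary cycles, choose an orientation of each facial cycle arbitrarily; every edge lies in exactly two of these oriented facial/boundary cycles. Let $D$ be the set of edges $uv$ of $G$ that are oriented towards $v$ in both of the two cycles containing them, and let $p(G,B_1,\ldots,B_k)=2|D|\bmod 4$ (this does not depend on the chosen orientations of the faces). A $3$-coloring is a proper coloring $\psi:V(G)\to\{1,2,3\}$. For an edge $uv$, $\delta_\psi(u,v)=1$ if $\psi(v)-\psi(u)\in\{1,-2\}$ and $-1$ otherwise; for a walk $W=u_1\ldots u_m$, $\delta_\psi(W)=\sum_{i=1}^{m-1}\delta_\psi(u_i,u_{i+1})$; for a closed walk $Q$, $\omega_\psi(Q)=\delta_\psi(Q)/3$. *)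

theory Defs
  imports Main "HOL.Rat"
begin

text \<open>A closed walk / cycle is a list of vertices [x0,...,x(n-1)], traversed
x0 -> x1 -> ... -> x(n-1) -> x0.\<close>

definition darts :: "'v list \<Rightarrow> ('v \<times> 'v) list" where
  "darts c = map (\<lambda>i. (c ! i, c ! (Suc i mod length c))) [0..<length c]"

definition is_cycle_in :: "'v set set \<Rightarrow> 'v list \<Rightarrow> bool" where
  "is_cycle_in E c \<longleftrightarrow> length c \<ge> 3 \<and> distinct c \<and>
     (\<forall>(u,v) \<in> set (darts c). {u,v} \<in> E)"

definition simple_graph :: "'v set \<Rightarrow> 'v set set \<Rightarrow> bool" where
  "simple_graph V E \<longleftrightarrow> finite V \<and>
     (\<forall>e\<in>E. \<exists>u v. e = {u,v} \<and> u \<noteq> v \<and> u \<in> V \<and> v \<in> V)"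

definition graph_connected :: "'v set \<Rightarrow> 'v set set \<Rightarrow> bool" where
  "graph_connected V E \<longleftrightarrow>
     (\<forall>u\<in>V. \<forall>v\<in>V. (u,v) \<in> {(a,b). {a,b} \<in> E}\<^sup>*)"

definition dart_count ::
  "'f set \<Rightarrow> ('f \<Rightarrow> 'v list) \<Rightarrow> 'v list list \<Rightarrow> 'v \<Rightarrow> 'v \<Rightarrow> nat" where
  "dart_count F face Bs u v =
     (\<Sum>f\<in>F. count_list (darts (face f)) (u,v)) +
     sum_list (map (\<lambda>B. count_list (darts B) (u,v)) Bs)"

text \<open>Corners of a closed walk c at vertex v: pairs {predecessor, successor}
of each occurrence of v.\<close>
definition corners :: "'v list \<Rightarrow> 'v \<Rightarrow> 'v set set" where
  "corners c v = {{c ! ((i + length c - 1) mod length c), c ! (Suc i mod length c)} | i.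
                   i < length c \<and> c ! i = v}"

text \<open>Link of v (faces together with the boundary walks, i.e. after capping the
boundary by discs) is connected on the neighbourhood of v: this is the manifold
condition at v.\<close>
definition link_connected ::
  "'v set set \<Rightarrow> 'f set \<Rightarrow> ('f \<Rightarrow> 'v list) \<Rightarrow> 'v list list \<Rightarrow> 'v \<Rightarrow> bool" where
  "link_connected E F face Bs v \<longleftrightarrow>
     (let N = {w. {v,w} \<in> E};
          R = (\<Union>f\<in>F. corners (face f) v) \<union> (\<Union>B\<in>set Bs. corners B v)
      in N \<noteq> {} \<and> (\<forall>w\<in>N. \<forall>w'\<in>N. (w,w') \<in> {(a,b). {a,b} \<in> R}\<^sup>*))"

text \<open>G=(V,E) with faces (face f, f in F, each given with an arbitrary orientation)
is a quadrangulation of a compact connected surface whose boundary cycles are traced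
by the directed closed walks Bs.\<close>
definition quadrangulation ::
  "'v set \<Rightarrow> 'v set set \<Rightarrow> 'f set \<Rightarrow> ('f \<Rightarrow> 'v list) \<Rightarrow> 'v list list \<Rightarrow> bool" where
  "quadrangulation V E F face Bs \<longleftrightarrow>
     simple_graph V E \<and> V \<noteq> {} \<and> graph_connected V E \<and> finite F \<and>
     (\<forall>f\<in>F. is_cycle_in E (face f) \<and> length (face f) = 4) \<and>
     (\<forall>B\<in>set Bs. is_cycle_in E B) \<and>
     (\<forall>i j. i < length Bs \<longrightarrow> j < length Bs \<longrightarrow> i \<noteq> j \<longrightarrow>
            set (Bs ! i) \<inter> set (Bs ! j) = {}) \<and>
     (\<forall>u v. {u,v} \<in> E \<longrightarrow> dart_count F face Bs u v + dart_count F face Bs v u = 2) \<and>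
     (\<forall>v\<in>V. link_connected E F face Bs v)"

text \<open>D: edges uv oriented towards v in both cycles containing them (as directed pairs).\<close>
definition D_set ::
  "'v set set \<Rightarrow> 'f set \<Rightarrow> ('f \<Rightarrow> 'v list) \<Rightarrow> 'v list list \<Rightarrow> ('v \<times> 'v) set" where
  "D_set E F face Bs = {(u,v). {u,v} \<in> E \<and> dart_count F face Bs u v = 2}"

definition p_inv ::
  "'v set set \<Rightarrow> 'f set \<Rightarrow> ('f \<Rightarrow> 'v list) \<Rightarrow> 'v list list \<Rightarrow> int" where
  "p_inv E F face Bs = (2 * int (card (D_set E F face Bs))) mod 4"

definition three_coloring :: "'v set \<Rightarrow> 'v set set \<Rightarrow> ('v \<Rightarrow> int) \<Rightarrow> bool" where
  "three_coloring V E \<psi> \<longleftrightarrow> (\<forall>v\<in>V. \<psi> v \<in> {1,2,3}) \<and>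
     (\<forall>u v. {u,v} \<in> E \<longrightarrow> \<psi> u \<noteq> \<psi> v)"

definition delta :: "('v \<Rightarrow> int) \<Rightarrow> 'v \<Rightarrow> 'v \<Rightarrow> int" where
  "delta \<psi> u v = (if \<psi> v - \<psi> u \<in> {1, -2} then 1 else -1)"

definition delta_closed :: "('v \<Rightarrow> int) \<Rightarrow> 'v list \<Rightarrow> int" where
  "delta_closed \<psi> c = sum_list (map (\<lambda>(u,v). delta \<psi> u v) (darts c))"

definition omega :: "('v \<Rightarrow> int) \<Rightarrow> 'v list \<Rightarrow> rat" where
  "omega \<psi> c = of_int (delta_closed \<psi> c) / 3"

end

theory Submission
  imports Defs
begin

text \<open>Along an edge of a proper 3-colouring, \<open>\<delta>(u,v) = \<plusminus>1\<close> and
\<open>\<delta>(u,v) \<equiv> \<psi> v - \<psi> u (mod 3)\<close>, so the \<open>\<delta>\<close>-sum of every closed walk is divisible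
by 3; for a face of length 4 it is also even and at most 4 in absolute value, hence 0.
Adding the \<open>\<delta>\<close>-sums of all faces and boundary walks therefore yields the total \<open>\<delta>\<close>-sum
\<open>T\<close> of the boundary walks, and regrouping by arcs gives \<open>T = \<Sum> m(u,v) \<delta>(u,v)\<close>, where
\<open>m(u,v)\<close> counts the traversals of \<open>u \<rightarrow> v\<close> and \<open>m(u,v) + m(v,u) = 2\<close>. Arcs with \<open>m = 1\<close>
cancel against their reverses, since \<open>\<delta>\<close> is antisymmetric, and each arc of \<open>D\<close> contributes
\<open>2\<delta> \<equiv> 2 (mod 4)\<close>. So \<open>3 \<Sum> \<omega>(B\<^sub>i) = T \<equiv> 2|D| (mod 4)\<close>, and \<open>3 \<equiv> -1\<close> gives the claim.\<close>

lemma dvd_sum_list_map: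
  fixes f :: "'a \<Rightarrow> 'b::comm_semiring_1"
  shows "(\<And>x. x \<in> set xs \<Longrightarrow> a dvd f x) \<Longrightarrow> a dvd (\<Sum>x\<leftarrow>xs. f x)"
  by (induction xs) auto

lemma sum_list_map_eq_sum_count_list:
  fixes f :: "'a \<Rightarrow> 'b::comm_semiring_1"
  assumes "set xs \<subseteq> X" "finite X"
  shows "(\<Sum>x\<leftarrow>xs. f x) = (\<Sum>x\<in>X. of_nat (count_list xs x) * f x)"
  using assms(1)
proof (induction xs)
  case (Cons a xs)
  have "(\<Sum>x\<in>X. of_nat (count_list (a # xs) x) * f x)
      = (\<Sum>x\<in>X. (if x = a then f x else 0) + of_nat (count_list xs x) * f x)"
    by (intro sum.cong) (auto simp: algebra_simps)
  also have "\<dots> = f a + (\<Sum>x\<in>X. of_nat (count_list xs x) * f x)"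
    using Cons.prems assms(2) by (simp add: sum.distrib)
  finally show ?case
    using Cons by simp
qed simp

lemma of_nat_sum_list_map:
  "(\<Sum>x\<leftarrow>xs. of_nat (f x) :: 'b::semiring_1) = of_nat (\<Sum>x\<leftarrow>xs. f x)"
  by (induction xs) auto

lemma of_int_sum_list_map:
  "(\<Sum>x\<leftarrow>xs. of_int (f x) :: 'b::ring_1) = of_int (\<Sum>x\<leftarrow>xs. f x)"
  by (induction xs) auto

lemma sum_list_divide_distrib:
  fixes f :: "'a \<Rightarrow> 'b::field"
  shows "(\<Sum>x\<leftarrow>xs. f x / c) = (\<Sum>x\<leftarrow>xs. f x) / c"
  by (induction xs) (simp_all add: add_divide_distrib)

lemma sum_list_map_sum:
  fixes g :: "'a \<Rightarrow> 'b \<Rightarrow> 'c::comm_monoid_add"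
  shows "(\<Sum>B\<leftarrow>Bs. \<Sum>x\<in>P. g B x) = (\<Sum>x\<in>P. \<Sum>B\<leftarrow>Bs. g B x)"
  by (induction Bs) (simp_all add: sum.distrib)

lemma sum_antisym_eq_0:
  fixes g :: "'a \<times> 'a \<Rightarrow> 'b::linordered_ab_group_add"
  assumes "sym P" and "\<And>x. x \<in> P \<Longrightarrow> g (prod.swap x) = - g x"
  shows "sum g P = 0"
proof -
  have "prod.swap ` P = P"
    using assms(1) by (auto simp: sym_conv_converse_eq[symmetric] converse_unfold dest: symD)
  then have "sum g P = sum g (prod.swap ` P)"
    by simp
  also have "\<dots> = sum (g \<circ> prod.swap) P"
    by (rule sum.reindex) (auto intro: inj_onI)
  also have "\<dots> = - sum g P"
    using assms(2) by (simp add: sum_negf)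
  finally show ?thesis
    by (simp add: equal_neg_zero)
qed

lemma sum_paired_weights_mod_4:
  fixes c :: "'a \<times> 'a \<Rightarrow> nat" and d :: "'a \<times> 'a \<Rightarrow> int"
  assumes "finite P" "sym P"
    and c_swap: "\<And>x. x \<in> P \<Longrightarrow> c x + c (prod.swap x) = 2"
    and d_swap: "\<And>x. x \<in> P \<Longrightarrow> d (prod.swap x) = - d x"
    and d_sign: "\<And>x. x \<in> P \<Longrightarrow> d x = 1 \<or> d x = -1"
  shows "4 dvd (\<Sum>x\<in>P. int (c x) * d x) - 2 * int (card {x\<in>P. c x = 2})"
proof -
  define single where "single x = (if c x = 1 then d x else 0)" for x
  define double where "double x = (if c x = 2 then 2 else 0 :: int)" for x
  have "sum single P = 0"
  proof (rule sum_antisym_eq_0[OF \<open>sym P\<close>])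
    fix x assume "x \<in> P"
    then show "single (prod.swap x) = - single x"
      using c_swap[of x] d_swap[of x] by (auto simp: single_def)
  qed
  moreover have "sum double P = 2 * int (card {x\<in>P. c x = 2})"
    using \<open>finite P\<close> by (simp add: double_def sum.If_cases Int_def)
  moreover have "4 dvd (\<Sum>x\<in>P. int (c x) * d x - (single x + double x))"
  proof (rule dvd_sum)
    fix x assume "x \<in> P"
    then have "c x \<in> {0, 1, 2}"
      using c_swap[of x] by auto
    with d_sign[OF \<open>x \<in> P\<close>] show "4 dvd int (c x) * d x - (single x + double x)"
      by (auto simp: single_def double_def)
  qed
  ultimately show ?thesis
    by (simp add: sum_subtractf sum.distrib)
qed

lemma map_fst_darts [simp]: "map fst (darts c) = c"
  by (rule nth_equalityI) (auto simp: darts_def)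

lemma map_snd_darts [simp]: "map snd (darts c) = rotate1 c"
  by (rule nth_equalityI) (auto simp: darts_def nth_rotate1)

lemma darts_length_4:
  "length c = 4 \<Longrightarrow> \<exists>a b c' d. darts c = [(a, b), (b, c'), (c', d), (d, a)]"
  by (auto simp: darts_def upt_rec length_Suc_conv numeral_eq_Suc)

lemma sum_list_darts_diff_eq_0:
  fixes f :: "'v \<Rightarrow> 'a::ab_group_add"
  shows "(\<Sum>(u, v)\<leftarrow>darts c. f v - f u) = 0"
proof -
  have "(\<Sum>(u, v)\<leftarrow>darts c. f v - f u)
      = sum_list (map f (map snd (darts c))) - sum_list (map f (map fst (darts c)))"
    by (simp add: case_prod_unfold sum_list_subtractf comp_def del: map_fst_darts map_snd_darts)
  then show ?thesis
    by (cases c) simp_all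
qed

lemma delta_cases: "delta \<psi> u v = 1 \<or> delta \<psi> u v = -1"
  by (simp add: delta_def)

lemma delta_swap:
  "\<psi> u \<in> {1, 2, 3} \<Longrightarrow> \<psi> v \<in> {1, 2, 3} \<Longrightarrow> \<psi> u \<noteq> \<psi> v \<Longrightarrow> delta \<psi> v u = - delta \<psi> u v"
  by (auto simp: delta_def)

lemma delta_cong_diff:
  "\<psi> u \<in> {1, 2, 3} \<Longrightarrow> \<psi> v \<in> {1, 2, 3} \<Longrightarrow> \<psi> u \<noteq> \<psi> v \<Longrightarrow> 3 dvd delta \<psi> u v - (\<psi> v - \<psi> u)"
  by (auto simp: delta_def)

definition arcs :: "'v set set \<Rightarrow> ('v \<times> 'v) set" where
  "arcs E = {(u, v). {u, v} \<in> E}"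

lemma sym_arcs: "sym (arcs E)"
  by (auto simp: arcs_def insert_commute intro: symI)

lemma simple_graph_edge_vertices:
  "simple_graph V E \<Longrightarrow> {u, v} \<in> E \<Longrightarrow> u \<in> V \<and> v \<in> V"
  unfolding simple_graph_def by (fastforce simp: doubleton_eq_iff)

lemma finite_arcs: "simple_graph V E \<Longrightarrow> finite (arcs E)"
proof -
  assume G: "simple_graph V E"
  then have "arcs E \<subseteq> V \<times> V"
    by (auto simp: arcs_def dest: simple_graph_edge_vertices)
  with G show ?thesis
    by (meson finite_SigmaI finite_subset simple_graph_def)
qed

lemma darts_subset_arcs: "is_cycle_in E c \<Longrightarrow> set (darts c) \<subseteq> arcs E"
  by (auto simp: is_cycle_in_def arcs_def)

lemma three_coloring_arc:
  assumes "simple_graph V E" "three_coloring V E \<psi>" "(u, v) \<in> arcs E"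
  shows "\<psi> u \<in> {1, 2, 3} \<and> \<psi> v \<in> {1, 2, 3} \<and> \<psi> u \<noteq> \<psi> v"
  using assms simple_graph_edge_vertices[of V E u v] by (auto simp: three_coloring_def arcs_def)

lemma dvd_delta_closed:
  assumes "simple_graph V E" "three_coloring V E \<psi>" "set (darts c) \<subseteq> arcs E"
  shows "3 dvd delta_closed \<psi> c"
proof -
  have "3 dvd (\<Sum>(u, v)\<leftarrow>darts c. delta \<psi> u v - (\<psi> v - \<psi> u))"
    using assms by (intro dvd_sum_list_map) (auto intro: delta_cong_diff dest: three_coloring_arc)
  moreover have "(\<Sum>(u, v)\<leftarrow>darts c. delta \<psi> u v - (\<psi> v - \<psi> u))
      = delta_closed \<psi> c - (\<Sum>(u, v)\<leftarrow>darts c. \<psi> v - \<psi> u)"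
    by (simp add: delta_closed_def case_prod_unfold sum_list_subtractf)
  ultimately show ?thesis
    by (simp add: sum_list_darts_diff_eq_0)
qed

lemma delta_closed_eq_0_if_length_4:
  assumes "simple_graph V E" "three_coloring V E \<psi>" "set (darts c) \<subseteq> arcs E" "length c = 4"
  shows "delta_closed \<psi> c = 0"
proof -
  obtain a b c' d where abcd: "darts c = [(a, b), (b, c'), (c', d), (d, a)]"
    using darts_length_4[OF \<open>length c = 4\<close>] by blast
  have "3 dvd delta_closed \<psi> c"
    using dvd_delta_closed[OF assms(1-3)] .
  then show ?thesis
    using delta_cases[of \<psi> a b] delta_cases[of \<psi> b c'] delta_cases[of \<psi> c' d] delta_cases[of \<psi> d a]
    unfolding delta_closed_def abcd by (elim disjE) simp_all
qed

lemma delta_closed_eq_sum_count_darts: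
  assumes "set (darts c) \<subseteq> P" "finite P"
  shows "delta_closed \<psi> c = (\<Sum>x\<in>P. int (count_list (darts c) x) * case_prod (delta \<psi>) x)"
  unfolding delta_closed_def by (rule sum_list_map_eq_sum_count_list[OF assms])

lemma sum_delta_closed_eq_sum_dart_count:
  assumes "finite F" "finite P"
    and "\<And>f. f \<in> F \<Longrightarrow> set (darts (face f)) \<subseteq> P" "\<And>B. B \<in> set Bs \<Longrightarrow> set (darts B) \<subseteq> P"
  shows "(\<Sum>f\<in>F. delta_closed \<psi> (face f)) + (\<Sum>B\<leftarrow>Bs. delta_closed \<psi> B)
       = (\<Sum>x\<in>P. int (case_prod (dart_count F face Bs) x) * case_prod (delta \<psi>) x)"
proof -
  let ?dl = "case_prod (delta \<psi>)"
  have "(\<Sum>f\<in>F. delta_closed \<psi> (face f))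
      = (\<Sum>f\<in>F. \<Sum>x\<in>P. int (count_list (darts (face f)) x) * ?dl x)"
    using assms by (intro sum.cong refl delta_closed_eq_sum_count_darts) auto
  also have "\<dots> = (\<Sum>x\<in>P. int (\<Sum>f\<in>F. count_list (darts (face f)) x) * ?dl x)"
    by (subst sum.swap) (simp add: sum_distrib_right)
  finally have faces: "(\<Sum>f\<in>F. delta_closed \<psi> (face f)) = \<dots>" .
  have "(\<Sum>B\<leftarrow>Bs. delta_closed \<psi> B) = (\<Sum>B\<leftarrow>Bs. \<Sum>x\<in>P. int (count_list (darts B) x) * ?dl x)"
    using assms by (intro arg_cong[where f = sum_list] map_cong refl delta_closed_eq_sum_count_darts) auto
  also have "\<dots> = (\<Sum>x\<in>P. int (\<Sum>B\<leftarrow>Bs. count_list (darts B) x) * ?dl x)"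
    by (simp add: sum_list_map_sum sum_list_mult_const of_nat_sum_list_map)
  finally have boundaries: "(\<Sum>B\<leftarrow>Bs. delta_closed \<psi> B) = \<dots>" .
  show ?thesis
    unfolding faces boundaries
    by (simp add: dart_count_def case_prod_beta sum.distrib[symmetric] algebra_simps)
qed

lemma sum_boundary_delta_closed_mod_4:
  assumes Q: "quadrangulation V E F face Bs" and C: "three_coloring V E \<psi>"
  shows "4 dvd (\<Sum>B\<leftarrow>Bs. delta_closed \<psi> B) - 2 * int (card (D_set E F face Bs))"
proof -
  have G: "simple_graph V E" and "finite F"
    using Q by (simp_all add: quadrangulation_def)
  let ?c = "case_prod (dart_count F face Bs)" and ?d = "case_prod (delta \<psi>)"
  have "(\<Sum>B\<leftarrow>Bs. delta_closed \<psi> B) = (\<Sum>x\<in>arcs E. int (?c x) * ?d x)"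
  proof -
    have "(\<Sum>f\<in>F. delta_closed \<psi> (face f)) = 0"
      using Q by (intro sum.neutral ballI delta_closed_eq_0_if_length_4[OF G C])
        (auto simp: quadrangulation_def darts_subset_arcs)
    moreover have "(\<Sum>f\<in>F. delta_closed \<psi> (face f)) + (\<Sum>B\<leftarrow>Bs. delta_closed \<psi> B)
        = (\<Sum>x\<in>arcs E. int (?c x) * ?d x)"
      using Q \<open>finite F\<close> finite_arcs[OF G]
      by (intro sum_delta_closed_eq_sum_dart_count) (auto simp: quadrangulation_def darts_subset_arcs)
    ultimately show ?thesis by simp
  qed
  moreover have "D_set E F face Bs = {x \<in> arcs E. ?c x = 2}"
    by (auto simp: D_set_def arcs_def)
  moreover have "4 dvd (\<Sum>x\<in>arcs E. int (?c x) * ?d x) - 2 * int (card {x \<in> arcs E. ?c x = 2})"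
  proof (rule sum_paired_weights_mod_4[OF finite_arcs[OF G] sym_arcs])
    fix x assume "x \<in> arcs E"
    then show "?c x + ?c (prod.swap x) = 2"
      using Q by (auto simp: quadrangulation_def arcs_def)
    show "?d (prod.swap x) = - ?d x"
      using three_coloring_arc[OF G C] \<open>x \<in> arcs E\<close> by (cases x) (auto intro: delta_swap)
    show "?d x = 1 \<or> ?d x = -1"
      by (simp add: case_prod_beta delta_cases)
  qed
  ultimately show ?thesis by simp
qed

theorem mainTheorem4:
  fixes V :: "'v set" and E :: "'v set set" and F :: "'f set"
    and face :: "'f \<Rightarrow> 'v list" and Bs :: "'v list list" and \<psi> :: "'v \<Rightarrow> int"
  assumes "quadrangulation V E F face Bs"
    and "three_coloring V E \<psi>"
  shows "\<exists>z::int. (\<Sum>B\<leftarrow>Bs. omega \<psi> B) - of_int (p_inv E F face Bs) = 4 * of_int z"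
proof -
  have G: "simple_graph V E"
    using assms(1) by (simp add: quadrangulation_def)
  define T where "T = (\<Sum>B\<leftarrow>Bs. delta_closed \<psi> B)"
  define d where "d = int (card (D_set E F face Bs))"
  have "3 dvd T"
    unfolding T_def using assms(1)
    by (intro dvd_sum_list_map dvd_delta_closed[OF G assms(2)])
      (auto simp: quadrangulation_def darts_subset_arcs)
  then obtain t where t: "T = 3 * t" ..
  have "4 dvd T - 2 * d"
    using sum_boundary_delta_closed_mod_4[OF assms] by (simp add: T_def d_def)
  then have "\<exists>z. t - (2 * d) mod 4 = 4 * z"
    unfolding t by presburger
  then obtain z where "t - (2 * d) mod 4 = 4 * z" ..
  moreover have "(\<Sum>B\<leftarrow>Bs. omega \<psi> B) = of_int t"
    by (simp add: omega_def sum_list_divide_distrib of_int_sum_list_map T_def[symmetric] t)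
  ultimately show ?thesis
    unfolding p_inv_def d_def[symmetric] by (metis of_int_diff of_int_mult of_int_numeral)
qed

end
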